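(* Let $\mathscr H$ be a complex Hilbert space and $\mathbf{X},\mathbf{Y},\mathbf{Z},\mathbf{W}\in\mathbb{B}(\mathscr H)^d$. Then $$w_e\left(\begin{bmatrix}\mathbf{X}&\mathbf{Y}\\\mathbf{Z}&\mathbf{W}\end{bmatrix}\right)\le\frac12\Big(w_e(\mathbf{X})+w_e(\mathbf{W})+\sqrt{(w_e(\mathbf{X})-w_e(\mathbf{W}))^2+(\|\mathbf{Y}\|+\|\mathbf{Z}\|)^2}\Big).$$
   Context: $\mathbb{B}(\mathscr H)$ denotes the bounded linear operators on $\mathscr H$. For $\mathbf{T}=(T_1,\dots,T_d)$: $w_e(\mathbf{T})=\sup\{(\sum_{k}|\langle T_kx,x\rangle|^2)^{1/2}: \|x\|=1\}$ and $\|\mathbf{T}\|=\sup\{(\sum_k\|T_kx\|^2)^{1/2}: \|x\|=1\}$. For $d$-tuples $\mathbf{X},\mathbf{Y},\mathbf{Z},\mathbf{W}$, $\begin{bmatrix}\mathbf{X}&\mathbf{Y}\\\mathbf{Z}&\mathbf{W}\end{bmatrix}$ denotes the $d$-tuple $\left(\begin{bmatrix}X_k&Y_k\\Z_k&W_k\end{bmatrix}\right)_{k=1}^d$ of operators on $\mathscr H\oplus\mathscr H$. *)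

theory Defs
  imports "HOL-Analysis.Analysis"
begin

class complex_vector = real_vector +
  fixes scaleC :: "complex \<Rightarrow> 'a \<Rightarrow> 'a" (infixr "*\<^sub>C" 75)
  assumes scaleC_add_right: "a *\<^sub>C (x + y) = a *\<^sub>C x + a *\<^sub>C y"
    and scaleC_add_left: "(a + b) *\<^sub>C x = a *\<^sub>C x + b *\<^sub>C x"
    and scaleC_scaleC: "a *\<^sub>C (b *\<^sub>C x) = (a * b) *\<^sub>C x"
    and scaleC_one: "1 *\<^sub>C x = x"
    and scaleR_scaleC: "scaleR r x = complex_of_real r *\<^sub>C x"

class complex_inner = complex_vector + real_normed_vector +
  fixes cinner :: "'a \<Rightarrow> 'a \<Rightarrow> complex"
  assumes cinner_commute: "cinner x y = cnj (cinner y x)"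
    and cinner_add_left: "cinner (x + y) z = cinner x z + cinner y z"
    and cinner_scaleC_left: "cinner (a *\<^sub>C x) y = cnj a * cinner x y"
    and cinner_ge_zero: "0 \<le> Re (cinner x x)"
    and cinner_eq_zero_iff: "cinner x x = 0 \<longleftrightarrow> x = 0"
    and norm_eq_sqrt_cinner: "norm x = sqrt (Re (cinner x x))"

class chilbert_space = complex_inner + complete_space

instantiation prod :: (complex_vector, complex_vector) complex_vector
begin
definition scaleC_prod_def: "c *\<^sub>C p = (c *\<^sub>C fst p, c *\<^sub>C snd p)"
instance
  by standard (auto simp: scaleC_prod_def scaleR_prod_def scaleC_add_right scaleC_add_left
      scaleC_scaleC scaleC_one scaleR_scaleC[symmetric])
end

instantiation prod :: (complex_inner, complex_inner) complex_inner
begin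
definition cinner_prod_def: "cinner p q = cinner (fst p) (fst q) + cinner (snd p) (snd q)"
instance
proof
  fix x y z :: "'a \<times> 'b" and a :: complex
  show "cinner x y = cnj (cinner y x)"
    by (simp add: cinner_prod_def cinner_commute[of "fst x"] cinner_commute[of "snd x"])
  show "cinner (x + y) z = cinner x z + cinner y z"
    by (simp add: cinner_prod_def cinner_add_left)
  show "cinner (a *\<^sub>C x) y = cnj a * cinner x y"
    by (simp add: cinner_prod_def scaleC_prod_def cinner_scaleC_left distrib_left)
  show "0 \<le> Re (cinner x x)"
    using cinner_ge_zero[of "fst x"] cinner_ge_zero[of "snd x"] by (simp add: cinner_prod_def)
  have ri: "\<And>u::'a. Im (cinner u u) = 0" "\<And>u::'b. Im (cinner u u) = 0"
  proof -
    fix u :: 'a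
    have "Im (cinner u u) = - Im (cinner u u)"
      using arg_cong[OF cinner_commute[of u u], of Im] by simp
    thus "Im (cinner u u) = 0" by simp
  next
    fix u :: 'b
    have "Im (cinner u u) = - Im (cinner u u)"
      using arg_cong[OF cinner_commute[of u u], of Im] by simp
    thus "Im (cinner u u) = 0" by simp
  qed
  show "cinner x x = 0 \<longleftrightarrow> x = 0"
  proof
    assume h: "cinner x x = 0"
    have "Re (cinner (fst x) (fst x)) + Re (cinner (snd x) (snd x)) = 0"
      using h by (simp add: cinner_prod_def complex_eq_iff)
    hence "Re (cinner (fst x) (fst x)) = 0" "Re (cinner (snd x) (snd x)) = 0"
      using cinner_ge_zero[of "fst x"] cinner_ge_zero[of "snd x"] by linarith+
    hence "cinner (fst x) (fst x) = 0" "cinner (snd x) (snd x) = 0"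
      using ri by (auto simp: complex_eq_iff)
    thus "x = 0" by (simp add: cinner_eq_zero_iff prod_eq_iff)
  next
    assume "x = 0" thus "cinner x x = 0"
      using cinner_eq_zero_iff[of "0::'a"] cinner_eq_zero_iff[of "0::'b"]
      by (simp add: cinner_prod_def)
  qed
  show "norm x = sqrt (Re (cinner x x))"
    using cinner_ge_zero[of "fst x"] cinner_ge_zero[of "snd x"]
    by (simp add: norm_prod_def cinner_prod_def norm_eq_sqrt_cinner)
qed
end

definition bounded_clinear :: "('a::complex_inner \<Rightarrow> 'b::complex_inner) \<Rightarrow> bool" where
  "bounded_clinear T \<longleftrightarrow> bounded_linear T \<and> (\<forall>c x. T (c *\<^sub>C x) = c *\<^sub>C T x)"

text \<open>A d-tuple of operators is a function nat => operator, only indices k < d matter.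
  The suprema are over unit vectors; 0 is inserted so that the (degenerate) case of the
  zero space gives 0 (all quantities are nonnegative, so this changes nothing otherwise).\<close>
definition euclid_numrad :: "nat \<Rightarrow> (nat \<Rightarrow> 'a::complex_inner \<Rightarrow> 'a) \<Rightarrow> real" where
  "euclid_numrad d T = Sup (insert 0
     {sqrt (\<Sum>k<d. (cmod (cinner (T k x) x))\<^sup>2) | x. norm x = 1})"

definition tuple_norm :: "nat \<Rightarrow> (nat \<Rightarrow> 'a::complex_inner \<Rightarrow> 'a) \<Rightarrow> real" where
  "tuple_norm d T = Sup (insert 0 {sqrt (\<Sum>k<d. (norm (T k x))\<^sup>2) | x. norm x = 1})"

definition block_tuple ::
  "(nat \<Rightarrow> 'a::complex_vector \<Rightarrow> 'a) \<Rightarrow> (nat \<Rightarrow> 'a \<Rightarrow> 'a) \<Rightarrow> (nat \<Rightarrow> 'a \<Rightarrow> 'a) \<Rightarrow>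
   (nat \<Rightarrow> 'a \<Rightarrow> 'a) \<Rightarrow> nat \<Rightarrow> 'a \<times> 'a \<Rightarrow> 'a \<times> 'a" where
  "block_tuple X Y Z W = (\<lambda>k p. (X k (fst p) + Y k (snd p), Z k (fst p) + W k (snd p)))"

end

theory Submission
  imports Defs
begin

text \<open>On a unit vector \<open>(x, y)\<close> of \<open>H \<oplus> H\<close> the quadratic form of the block tuple splits into
  four terms. By the triangle inequality in \<open>\<ell>\<^sup>2\<close> and Cauchy-Schwarz, its Euclidean size is at most
  \<open>w\<^sub>e(X) a\<^sup>2 + (\<parallel>Y\<parallel> + \<parallel>Z\<parallel>) a b + w\<^sub>e(W) b\<^sup>2\<close> with \<open>a = \<parallel>x\<parallel>\<close>, \<open>b = \<parallel>y\<parallel>\<close>, \<open>a\<^sup>2 + b\<^sup>2 = 1\<close>. This is the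
  quadratic form of a real symmetric \<open>2 \<times> 2\<close> matrix at a unit vector, hence bounded by its larger
  eigenvalue, which is the right-hand side.\<close>

lemma cnj_mult_self: "cnj c * c = complex_of_real ((cmod c)\<^sup>2)"
  by (metis complex_norm_square mult.commute)

lemma cinner_add_right: "cinner (x::'a::complex_inner) (y + z) = cinner x y + cinner x z"
  by (metis cinner_add_left cinner_commute complex_cnj_add)

lemma cinner_scaleC_right: "cinner (x::'a::complex_inner) (a *\<^sub>C y) = a * cinner x y"
  by (metis cinner_scaleC_left cinner_commute complex_cnj_cnj complex_cnj_mult)

lemma cinner_zero_right[simp]: "cinner (x::'a::complex_inner) 0 = 0"
  using cinner_add_right[of x 0 0] by simp

lemma cinner_self: "cinner (x::'a::complex_inner) x = complex_of_real ((norm x)\<^sup>2)"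
proof -
  have "Im (cinner x x) = - Im (cinner x x)"
    using arg_cong[OF cinner_commute[of x x], of Im] by simp
  hence "Im (cinner x x) = 0" by simp
  moreover have "Re (cinner x x) = (norm x)\<^sup>2"
    using norm_eq_sqrt_cinner[of x] cinner_ge_zero[of x] by simp
  ultimately show ?thesis by (simp add: complex_eq_iff)
qed

lemma cinner_scaleR_left: "cinner (r *\<^sub>R (x::'a::complex_inner)) y = complex_of_real r * cinner x y"
  by (simp add: scaleR_scaleC cinner_scaleC_left)

lemma cinner_scaleR_right: "cinner (x::'a::complex_inner) (r *\<^sub>R y) = complex_of_real r * cinner x y"
  by (simp add: scaleR_scaleC cinner_scaleC_right)

lemma norm_cinner_le: "cmod (cinner (x::'a::complex_inner) y) \<le> norm x * norm y"
proof (cases "y = 0")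
  case True thus ?thesis by simp
next
  case False
  define c where "c = cinner x y"
  define s where "s = 1 / (norm y)\<^sup>2"
  have ny: "norm y > 0" using False by simp
  define t where "t = - complex_of_real s * cnj c"
  \<comment> \<open>the minimiser of \<open>\<parallel>x + t y\<parallel>\<^sup>2\<close>\<close>
  have "cinner (x + t *\<^sub>C y) (x + t *\<^sub>C y)
     = cinner x x + t * c + cnj t * cnj c + cnj t * t * cinner y y"
    by (simp add: cinner_add_left cinner_add_right cinner_scaleC_left cinner_scaleC_right
        c_def cinner_commute[of y x] algebra_simps)
  moreover have "t * c = - complex_of_real (s * (cmod c)\<^sup>2)"
    using cnj_mult_self[of c] by (simp add: t_def mult.assoc del: of_real_power)
  moreover have "cnj t * cnj c = - complex_of_real (s * (cmod c)\<^sup>2)"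
    using cnj_mult_self[of c] by (simp add: t_def mult.commute mult.left_commute del: of_real_power)
  moreover have "cnj t * t = complex_of_real (s\<^sup>2 * (cmod c)\<^sup>2)"
    using cnj_mult_self[of c] by (simp add: t_def mult.commute mult.left_commute power2_eq_square del: of_real_power)
  ultimately have "Re (cinner (x + t *\<^sub>C y) (x + t *\<^sub>C y))
     = (norm x)\<^sup>2 - 2 * s * (cmod c)\<^sup>2 + s\<^sup>2 * (cmod c)\<^sup>2 * (norm y)\<^sup>2"
    by (simp add: cinner_self)
  also have "\<dots> = (norm x)\<^sup>2 - (cmod c)\<^sup>2 / (norm y)\<^sup>2"
    using ny by (simp add: s_def field_simps power2_eq_square)
  finally have "0 \<le> (norm x)\<^sup>2 - (cmod c)\<^sup>2 / (norm y)\<^sup>2"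
    by (metis cinner_ge_zero)
  hence "(cmod c)\<^sup>2 \<le> (norm x * norm y)\<^sup>2"
    using ny by (simp add: field_simps power_mult_distrib)
  thus ?thesis unfolding c_def
    by (meson abs_le_square_iff abs_of_nonneg norm_ge_zero order_trans abs_ge_self
        mult_nonneg_nonneg power2_le_imp_le)
qed

lemma L2_set_norm_add_le:
  fixes f g :: "'i \<Rightarrow> 'a::real_normed_vector"
  shows "L2_set (\<lambda>k. norm (f k + g k)) A \<le> L2_set (\<lambda>k. norm (f k)) A + L2_set (\<lambda>k. norm (g k)) A"
  by (rule order_trans[OF L2_set_mono[OF norm_triangle_ineq] L2_set_triangle_ineq]) simp

lemma bounded_linear_tuple_L2_bounded:
  fixes T :: "nat \<Rightarrow> 'a::real_normed_vector \<Rightarrow> 'b::real_normed_vector"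
  assumes "\<forall>k<d. bounded_linear (T k)"
  obtains B where "\<And>x. norm x = 1 \<Longrightarrow> L2_set (\<lambda>k. norm (T k x)) {..<d} \<le> B"
proof -
  have "\<forall>k. \<exists>K. k < d \<longrightarrow> (\<forall>x. norm (T k x) \<le> norm x * K)"
    using assms bounded_linear.bounded by blast
  then obtain K where K: "\<And>k x. k < d \<Longrightarrow> norm (T k x) \<le> norm x * K k" by metis
  have "L2_set (\<lambda>k. norm (T k x)) {..<d} \<le> L2_set K {..<d}" if "norm x = 1" for x
    using K that by (intro L2_set_mono) (auto, metis mult_1)
  thus thesis by (rule that)
qed

lemma bdd_above_tuple_norm_set:
  fixes T :: "nat \<Rightarrow> 'a::complex_inner \<Rightarrow> 'a"
  assumes "\<forall>k<d. bounded_linear (T k)"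
  shows "bdd_above (insert 0 {sqrt (\<Sum>k<d. (norm (T k x))\<^sup>2) | x. norm x = 1})"
proof -
  obtain B where "\<And>x. norm x = 1 \<Longrightarrow> L2_set (\<lambda>k. norm (T k x)) {..<d} \<le> B"
    using bounded_linear_tuple_L2_bounded[OF assms] by blast
  thus ?thesis unfolding bdd_above_def
    by (intro exI[of _ "max 0 B"]) (fastforce simp: L2_set_def le_max_iff_disj)
qed

lemma bdd_above_euclid_numrad_set:
  fixes T :: "nat \<Rightarrow> 'a::complex_inner \<Rightarrow> 'a"
  assumes "\<forall>k<d. bounded_linear (T k)"
  shows "bdd_above (insert 0 {sqrt (\<Sum>k<d. (cmod (cinner (T k x) x))\<^sup>2) | x. norm x = 1})"
proof -
  obtain B where B: "\<And>x. norm x = 1 \<Longrightarrow> L2_set (\<lambda>k. norm (T k x)) {..<d} \<le> B"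
    using bounded_linear_tuple_L2_bounded[OF assms] by blast
  have "L2_set (\<lambda>k. cmod (cinner (T k x) x)) {..<d} \<le> B" if "norm x = 1" for x
    using norm_cinner_le[of "T _ x" x] that
    by (intro order_trans[OF L2_set_mono B]) auto
  thus ?thesis unfolding bdd_above_def
    by (intro exI[of _ "max 0 B"]) (fastforce simp: L2_set_def le_max_iff_disj)
qed

lemma euclid_numrad_nonneg:
  fixes T :: "nat \<Rightarrow> 'a::complex_inner \<Rightarrow> 'a"
  assumes "\<forall>k<d. bounded_linear (T k)"
  shows "0 \<le> euclid_numrad d T"
  unfolding euclid_numrad_def by (intro cSup_upper bdd_above_euclid_numrad_set assms) simp

lemma tuple_norm_nonneg:
  fixes T :: "nat \<Rightarrow> 'a::complex_inner \<Rightarrow> 'a"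
  assumes "\<forall>k<d. bounded_linear (T k)"
  shows "0 \<le> tuple_norm d T"
  unfolding tuple_norm_def by (intro cSup_upper bdd_above_tuple_norm_set assms) simp

lemma euclid_numrad_le:
  fixes T :: "nat \<Rightarrow> 'a::complex_inner \<Rightarrow> 'a"
  assumes "0 \<le> R" and "\<And>x. norm x = 1 \<Longrightarrow> L2_set (\<lambda>k. cmod (cinner (T k x) x)) {..<d} \<le> R"
  shows "euclid_numrad d T \<le> R"
  unfolding euclid_numrad_def using assms by (intro cSup_least) (auto simp: L2_set_def)

lemma L2_set_cinner_le_euclid_numrad:
  fixes T :: "nat \<Rightarrow> 'a::complex_inner \<Rightarrow> 'a"
  assumes lin: "\<forall>k<d. bounded_linear (T k)"
  shows "L2_set (\<lambda>k. cmod (cinner (T k x) x)) {..<d} \<le> euclid_numrad d T * (norm x)\<^sup>2"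
proof (cases "x = 0")
  case False
  define u where "u = sgn x"
  have x: "x = norm x *\<^sub>R u" by (simp add: u_def sgn_div_norm False)
  have "L2_set (\<lambda>k. cmod (cinner (T k x) x)) {..<d}
      = L2_set (\<lambda>k. (norm x)\<^sup>2 * cmod (cinner (T k u) u)) {..<d}"
    using lin by (subst (1 2) x, intro L2_set_cong)
      (auto simp: linear_simps cinner_scaleR_left cinner_scaleR_right norm_mult
        power2_eq_square)
  also have "\<dots> = (norm x)\<^sup>2 * L2_set (\<lambda>k. cmod (cinner (T k u) u)) {..<d}"
    by (simp add: L2_set_right_distrib)
  also have "\<dots> \<le> (norm x)\<^sup>2 * euclid_numrad d T"
    unfolding euclid_numrad_def using False
    by (intro mult_left_mono cSup_upper bdd_above_euclid_numrad_set lin)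
      (auto simp: u_def norm_sgn L2_set_def)
  finally show ?thesis by (simp add: mult.commute)
qed (simp add: L2_set_0')

lemma L2_set_norm_le_tuple_norm:
  fixes T :: "nat \<Rightarrow> 'a::complex_inner \<Rightarrow> 'a"
  assumes lin: "\<forall>k<d. bounded_linear (T k)"
  shows "L2_set (\<lambda>k. norm (T k x)) {..<d} \<le> tuple_norm d T * norm x"
proof (cases "x = 0")
  case True
  thus ?thesis using lin by (simp add: L2_set_0' linear_simps)
next
  case False
  define u where "u = sgn x"
  have x: "x = norm x *\<^sub>R u" by (simp add: u_def sgn_div_norm False)
  have "L2_set (\<lambda>k. norm (T k x)) {..<d} = L2_set (\<lambda>k. norm x * norm (T k u)) {..<d}"
    using lin by (subst x, intro L2_set_cong) (auto simp: linear_simps)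
  also have "\<dots> = norm x * L2_set (\<lambda>k. norm (T k u)) {..<d}"
    by (simp add: L2_set_right_distrib)
  also have "\<dots> \<le> norm x * tuple_norm d T"
    unfolding tuple_norm_def using False
    by (intro mult_left_mono cSup_upper bdd_above_tuple_norm_set lin)
      (auto simp: u_def norm_sgn L2_set_def)
  finally show ?thesis by (simp add: mult.commute)
qed

lemma L2_set_cinner_le_tuple_norm:
  fixes T :: "nat \<Rightarrow> 'a::complex_inner \<Rightarrow> 'a"
  assumes "\<forall>k<d. bounded_linear (T k)"
  shows "L2_set (\<lambda>k. cmod (cinner (T k y) x)) {..<d} \<le> tuple_norm d T * norm y * norm x"
proof -
  have "L2_set (\<lambda>k. cmod (cinner (T k y) x)) {..<d} \<le> L2_set (\<lambda>k. norm (T k y) * norm x) {..<d}"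
    using norm_cinner_le by (intro L2_set_mono) auto
  also have "\<dots> = L2_set (\<lambda>k. norm (T k y)) {..<d} * norm x"
    by (simp add: L2_set_left_distrib)
  also have "\<dots> \<le> tuple_norm d T * norm y * norm x"
    using L2_set_norm_le_tuple_norm[OF assms] by (intro mult_right_mono) auto
  finally show ?thesis .
qed

lemma L2_set_cinner_block_tuple_le:
  fixes X Y Z W :: "nat \<Rightarrow> 'a::complex_inner \<Rightarrow> 'a"
  assumes "\<forall>k<d. bounded_linear (X k)" and "\<forall>k<d. bounded_linear (Y k)"
    and "\<forall>k<d. bounded_linear (Z k)" and "\<forall>k<d. bounded_linear (W k)"
  shows "L2_set (\<lambda>k. cmod (cinner (block_tuple X Y Z W k (x, y)) (x, y))) {..<d}
    \<le> euclid_numrad d X * (norm x)\<^sup>2 + euclid_numrad d W * (norm y)\<^sup>2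
       + (tuple_norm d Y + tuple_norm d Z) * (norm x * norm y)"
proof -
  let ?L = "\<lambda>f. L2_set (\<lambda>k. cmod (f k)) {..<d}"
  have split: "cinner (block_tuple X Y Z W k (x, y)) (x, y)
      = (cinner (X k x) x + cinner (W k y) y) + (cinner (Y k y) x + cinner (Z k x) y)" for k
    by (simp add: block_tuple_def cinner_prod_def cinner_add_left)
  have "?L (\<lambda>k. cinner (block_tuple X Y Z W k (x, y)) (x, y))
      \<le> ?L (\<lambda>k. cinner (X k x) x + cinner (W k y) y) + ?L (\<lambda>k. cinner (Y k y) x + cinner (Z k x) y)"
    unfolding split by (rule L2_set_norm_add_le)
  also have "\<dots> \<le> (?L (\<lambda>k. cinner (X k x) x) + ?L (\<lambda>k. cinner (W k y) y))
        + (?L (\<lambda>k. cinner (Y k y) x) + ?L (\<lambda>k. cinner (Z k x) y))"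
    by (intro add_mono L2_set_norm_add_le)
  also have "\<dots> \<le> (euclid_numrad d X * (norm x)\<^sup>2 + euclid_numrad d W * (norm y)\<^sup>2)
      + (tuple_norm d Y * norm y * norm x + tuple_norm d Z * norm x * norm y)"
    using assms by (intro add_mono L2_set_cinner_le_euclid_numrad L2_set_cinner_le_tuple_norm)
  finally show ?thesis by (simp add: algebra_simps)
qed

lemma weighted_am_gm:
  fixes A B a b :: real
  assumes "0 \<le> A" "0 \<le> B"
  shows "2 * sqrt (A * B) * (a * b) \<le> A * a\<^sup>2 + B * b\<^sup>2"
proof -
  have "0 \<le> (sqrt A * a - sqrt B * b)\<^sup>2" by simp
  also have "\<dots> = A * a\<^sup>2 + B * b\<^sup>2 - 2 * sqrt (A * B) * (a * b)"
    using assms by (simp add: power2_eq_square real_sqrt_mult algebra_simps)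
  finally show ?thesis by simp
qed

lemma quadratic_form_le_max_eigenvalue:
  fixes p q r a b :: real
  assumes "0 \<le> r" "a\<^sup>2 + b\<^sup>2 = 1"
  shows "p * a\<^sup>2 + q * b\<^sup>2 + r * (a * b) \<le> 1/2 * (p + q + sqrt ((p - q)\<^sup>2 + r\<^sup>2))"
proof -
  define s where "s = sqrt ((p - q)\<^sup>2 + r\<^sup>2)"
  define m where "m = 1/2 * (p + q + s)"
  \<comment> \<open>\<open>m\<close> is the larger eigenvalue of \<open>[[p, r/2], [r/2, q]]\<close>: \<open>(m - p)(m - q) = (r/2)\<^sup>2\<close>.\<close>
  have "\<bar>p - q\<bar> \<le> s" unfolding s_def by (rule real_sqrt_ge_abs1)
  hence gaps: "0 \<le> m - p" "0 \<le> m - q" unfolding m_def by (auto simp: abs_le_iff)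
  have "(m - p) * (m - q) = (s\<^sup>2 - (p - q)\<^sup>2) / 4"
    unfolding m_def by (simp add: power2_eq_square field_simps)
  also have "\<dots> = (r / 2)\<^sup>2" unfolding s_def by (simp add: power2_eq_square)
  finally have "2 * sqrt ((m - p) * (m - q)) = r" using assms(1) by simp
  hence "r * (a * b) \<le> (m - p) * a\<^sup>2 + (m - q) * b\<^sup>2"
    using weighted_am_gm[OF gaps] by metis
  also have "\<dots> = m * (a\<^sup>2 + b\<^sup>2) - p * a\<^sup>2 - q * b\<^sup>2" by (simp add: algebra_simps)
  finally show ?thesis using assms(2) unfolding m_def s_def by (simp add: algebra_simps)
qed

theorem corollary3p5:
  fixes X Y Z W :: "nat \<Rightarrow> 'h::chilbert_space \<Rightarrow> 'h" and d :: nat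
  assumes "\<forall>k<d. bounded_clinear (X k)" and "\<forall>k<d. bounded_clinear (Y k)"
    and "\<forall>k<d. bounded_clinear (Z k)" and "\<forall>k<d. bounded_clinear (W k)"
  shows "euclid_numrad d (block_tuple X Y Z W)
    \<le> 1/2 * (euclid_numrad d X + euclid_numrad d W
       + sqrt ((euclid_numrad d X - euclid_numrad d W)\<^sup>2 + (tuple_norm d Y + tuple_norm d Z)\<^sup>2))"
proof -
  have lin: "\<forall>k<d. bounded_linear (X k)" "\<forall>k<d. bounded_linear (Y k)"
    "\<forall>k<d. bounded_linear (Z k)" "\<forall>k<d. bounded_linear (W k)"
    using assms by (simp_all add: bounded_clinear_def)
  define p where "p = euclid_numrad d X"
  define q where "q = euclid_numrad d W"
  define r where "r = tuple_norm d Y + tuple_norm d Z"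
  have "0 \<le> p" "0 \<le> q" "0 \<le> r"
    using lin by (simp_all add: p_def q_def r_def euclid_numrad_nonneg tuple_norm_nonneg)
  have "euclid_numrad d (block_tuple X Y Z W) \<le> 1/2 * (p + q + sqrt ((p - q)\<^sup>2 + r\<^sup>2))"
  proof (rule euclid_numrad_le)
    show "0 \<le> 1/2 * (p + q + sqrt ((p - q)\<^sup>2 + r\<^sup>2))" using \<open>0 \<le> p\<close> \<open>0 \<le> q\<close> by simp
    fix v :: "'h \<times> 'h" assume "norm v = 1"
    then obtain x y where v: "v = (x, y)" and unit: "(norm x)\<^sup>2 + (norm y)\<^sup>2 = 1"
      by (cases v) (simp add: norm_prod_def)
    show "L2_set (\<lambda>k. cmod (cinner (block_tuple X Y Z W k v) v)) {..<d}
        \<le> 1/2 * (p + q + sqrt ((p - q)\<^sup>2 + r\<^sup>2))"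
      unfolding v p_def q_def r_def
      using L2_set_cinner_block_tuple_le[OF lin]
        quadratic_form_le_max_eigenvalue[OF \<open>0 \<le> r\<close>[unfolded r_def] unit]
      by (rule order_trans)
  qed
  thus ?thesis by (simp only: p_def q_def r_def)
qed

end
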